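(* Let $A\in\mathbb{R}^{n\times n}$ and $C\in\mathbb{R}^{m\times n}$. Define subspaces of $\mathbb{R}^n$ by $S_0:=\mathcal{N}(C)$ (the null space of $C$) and $S_k:=AS_{k-1}\cap S_0$ for $k=1,2,\ldots$, where $AS:=\{As: s\in S\}$. Then the linear system $x^+=Ax$, $y=Cx$ (with state space $\mathbb{R}^n$ and output space $\mathbb{R}^m$) is deadbeat observable if and only if $S_n=\{0\}$.
   Context: Consider a discrete-time system $x^+=f(x)$, $y=h(x)$ with $x\in\mathcal{X}\subset\mathbb{R}^n$, $y\in\mathcal{Y}\subset\mathbb{R}^m$; its solution from $x$ is $\phi(k,x)$, with $\phi(0,x)=x$, $\phi(k+1,x)=f(\phi(k,x))$. Given a set-valued map $g:\mathcal{X}\times\mathcal{Y}\rightrightarrows\mathcal{X}$, consider the cascade $x^+=f(x)$, $\hat x^+\in g(\hat x,h(x))$; a solution of the second component is any sequence $\psi(k,\hat x,x)$ with $\psi(0,\hat x,x)=\hat x$ and $\psi(k+1,\hat x,x)\in g(\psi(k,\hat x,x),h(\phi(k,x)))$ for all $k$. The system $\hat x^+\in g(\hat x,y)$ is a deadbeat observer for $x^+=f(x),\,y=h(x)$ if there exists an integer $p\ge1$ such that all such solutions satisfy $\psi(k,\hat x,x)=\phi(k,x)$ for all $x,\hat x\in\mathcal{X}$ and all $k\ge p$. The system is deadbeat observable if a deadbeat observer for it exists. *)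

theory Defs
  imports "HOL-Analysis.Analysis"
begin

definition observer_solution ::
  "('x \<Rightarrow> 'x) \<Rightarrow> ('x \<Rightarrow> 'y) \<Rightarrow> ('x \<Rightarrow> 'y \<Rightarrow> 'x set) \<Rightarrow> 'x \<Rightarrow> 'x \<Rightarrow> (nat \<Rightarrow> 'x) \<Rightarrow> bool"
  where "observer_solution f h g xh x psi \<longleftrightarrow>
           psi 0 = xh \<and> (\<forall>k. psi (Suc k) \<in> g (psi k) (h ((f ^^ k) x)))"

definition setvalued_map :: "'x set \<Rightarrow> 'y set \<Rightarrow> ('x \<Rightarrow> 'y \<Rightarrow> 'x set) \<Rightarrow> bool"
  where "setvalued_map X Y g \<longleftrightarrow> (\<forall>xh\<in>X. \<forall>y\<in>Y. g xh y \<noteq> {} \<and> g xh y \<subseteq> X)"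

definition deadbeat_observer ::
  "'x set \<Rightarrow> ('x \<Rightarrow> 'x) \<Rightarrow> ('x \<Rightarrow> 'y) \<Rightarrow> ('x \<Rightarrow> 'y \<Rightarrow> 'x set) \<Rightarrow> bool"
  where "deadbeat_observer X f h g \<longleftrightarrow>
    (\<exists>p::nat. p \<ge> 1 \<and> (\<forall>x\<in>X. \<forall>xh\<in>X. \<forall>psi. observer_solution f h g xh x psi \<longrightarrow>
        (\<forall>k\<ge>p. psi k = (f ^^ k) x)))"

definition deadbeat_observable ::
  "'x set \<Rightarrow> 'y set \<Rightarrow> ('x \<Rightarrow> 'x) \<Rightarrow> ('x \<Rightarrow> 'y) \<Rightarrow> bool"
  where "deadbeat_observable X Y f h \<longleftrightarrow>
    (\<exists>g. setvalued_map X Y g \<and> deadbeat_observer X f h g)"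

fun unobs_seq :: "real^'n^'n \<Rightarrow> real^'n^'m \<Rightarrow> nat \<Rightarrow> (real^'n) set" where
  "unobs_seq A C 0 = {x. C *v x = 0}"
| "unobs_seq A C (Suc k) = ((\<lambda>s. A *v s) ` unobs_seq A C k) \<inter> {x. C *v x = 0}"

end

theory Submission
  imports Defs
begin

(* The unobservable subspaces S_0 = ker h, S_(k+1) = f S_k \<inter> ker h are developed for
   arbitrary linear maps (unobs f h k); S_k consists of the endpoints f^k w of
   trajectories whose first k+1 outputs vanish.  The sequence decreases, so by a
   dimension count it is constant from index DIM('a) on.

   Necessity: running a deadbeat observer with horizon p on the outputs of w and of 0
   shows that any trajectory with p vanishing outputs is at 0 at time p.  Hence
   S_k = {0} for k \<ge> p, and by stabilisation S_DIM = {0}.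

   Sufficiency: with E_0 = UNIV, E_(k+1) = f (E_k \<inter> ker h) (so E_k \<inter> ker h = S_k), the
   "greedy" observer moves to f z for a z consistent with the output whose deviation
   from the estimate lies in the smallest possible E_j.  The estimation error after k
   steps lies in E_k, and E_(N+1) = f S_N = {0} once S_N = {0}. *)

section \<open>Unobservable subspaces of a linear system\<close>

fun unobs :: "('a::real_vector \<Rightarrow> 'a) \<Rightarrow> ('a \<Rightarrow> 'b::real_vector) \<Rightarrow> nat \<Rightarrow> 'a set" where
  "unobs f h 0 = {x. h x = 0}"
| "unobs f h (Suc k) = f ` unobs f h k \<inter> {x. h x = 0}"

lemma unobs_seq_eq_unobs: "unobs_seq A C k = unobs ((*v) A) ((*v) C) k"
  by (induction k) simp_all

lemma subspace_unobs:
  assumes "linear f" "linear h"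
  shows "subspace (unobs f h k)"
  by (induction k) (auto intro!: subspace_inter linear_subspace_image linear_subspace_kernel assms)

lemma zero_in_unobs:
  assumes "linear f" "linear h"
  shows "0 \<in> unobs f h k"
  using subspace_unobs[OF assms] by (rule subspace_0)

lemma unobs_Suc_subset: "unobs f h (Suc k) \<subseteq> unobs f h k"
  by (induction k) auto

lemma unobs_stable:
  assumes "unobs f h (Suc k) = unobs f h k"
  shows "unobs f h (k + j) = unobs f h k"
proof (induction j)
  case (Suc j)
  then have "unobs f h (Suc (k + j)) = unobs f h (Suc k)" by simp
  with Suc assms show ?case by simp
qed simp

text \<open>A strictly decreasing chain of subspaces loses a dimension at each step, so
  two consecutive terms agree within the first DIM('a) steps.\<close>

lemma unobs_stabilizes:
  fixes f :: "'a::euclidean_space \<Rightarrow> 'a"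
  assumes "linear f" "linear h"
  obtains k where "k \<le> DIM('a)" "unobs f h (Suc k) = unobs f h k"
proof -
  have "\<exists>k\<le>DIM('a). unobs f h (Suc k) = unobs f h k"
  proof (rule ccontr)
    assume strict: "\<not> ?thesis"
    have drop: "dim (unobs f h k) + k \<le> dim (unobs f h 0)" if "k \<le> Suc DIM('a)" for k
      using that
    proof (induction k)
      case (Suc k)
      have "unobs f h (Suc k) \<subset> unobs f h k"
        using strict Suc.prems unobs_Suc_subset[of f h k] by auto
      then have "dim (unobs f h (Suc k)) < dim (unobs f h k)"
        using dim_psubset span_eq_iff subspace_unobs[OF assms] by metis
      with Suc show ?case by simp
    qed simp
    have "dim (unobs f h 0) \<le> DIM('a)" by (rule dim_subset_UNIV)
    with drop[of "Suc DIM('a)"] show False by simp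
  qed
  with that show ?thesis by blast
qed

corollary unobs_DIM_eq:
  fixes f :: "'a::euclidean_space \<Rightarrow> 'a"
  assumes "linear f" "linear h"
  shows "unobs f h (DIM('a) + j) = unobs f h DIM('a)"
proof -
  obtain k where k: "k \<le> DIM('a)" "unobs f h (Suc k) = unobs f h k"
    using unobs_stabilizes[OF assms] .
  have "unobs f h (DIM('a) + j) = unobs f h (k + (DIM('a) - k + j))" using k(1) by simp
  also have "\<dots> = unobs f h (k + (DIM('a) - k))" unfolding unobs_stable[OF k(2)] ..
  finally show ?thesis using k(1) by simp
qed

lemma unobs_trajectory:
  assumes "x \<in> unobs f h k"
  shows "\<exists>w. (f ^^ k) w = x \<and> (\<forall>i\<le>k. h ((f ^^ i) w) = 0)"
  using assms
proof (induction k arbitrary: x)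
  case (Suc k)
  then obtain s where s: "s \<in> unobs f h k" "x = f s" "h x = 0" by auto
  from Suc.IH[OF s(1)] obtain w where w: "(f ^^ k) w = s" "\<forall>i\<le>k. h ((f ^^ i) w) = 0"
    by blast
  have "h ((f ^^ i) w) = 0" if "i \<le> Suc k" for i
    using that w s by (cases "i = Suc k") auto
  with w s show ?case by auto
qed auto

lemma funpow_linear_zero:
  fixes f :: "'a::real_vector \<Rightarrow> 'a"
  assumes "linear f"
  shows "(f ^^ k) 0 = 0"
  by (induction k) (simp_all add: linear_0[OF assms])

section \<open>Necessity\<close>

primrec observer_run :: "('x \<Rightarrow> 'y \<Rightarrow> 'x set) \<Rightarrow> 'x \<Rightarrow> (nat \<Rightarrow> 'y) \<Rightarrow> nat \<Rightarrow> 'x" where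
  "observer_run g xh u 0 = xh"
| "observer_run g xh u (Suc k) = (SOME v. v \<in> g (observer_run g xh u k) (u k))"

lemma observer_run_solution:
  assumes "setvalued_map UNIV UNIV g"
  shows "observer_solution f h g xh x (observer_run g xh (\<lambda>k. h ((f ^^ k) x)))"
  using assms unfolding observer_solution_def setvalued_map_def
  by (auto simp: some_in_eq)

lemma observer_run_causal: "\<forall>i<k. u i = u' i \<Longrightarrow> observer_run g xh u k = observer_run g xh u' k"
  by (induction k) auto

text \<open>A deadbeat observer with horizon p cannot tell apart two initial states whose
  first p outputs agree, so their trajectories must meet at time p.\<close>

lemma deadbeat_observer_merges:
  assumes "setvalued_map UNIV UNIV g" "deadbeat_observer UNIV f h g"
  obtains p where "\<And>w w'. \<forall>i<p. h ((f ^^ i) w) = h ((f ^^ i) w') \<Longrightarrow> (f ^^ p) w = (f ^^ p) w'"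
proof -
  obtain p where exact: "\<And>x xh psi. observer_solution f h g xh x psi \<Longrightarrow> psi p = (f ^^ p) x"
    using assms(2) unfolding deadbeat_observer_def by blast
  have "(f ^^ p) w = (f ^^ p) w'" if same: "\<forall>i<p. h ((f ^^ i) w) = h ((f ^^ i) w')" for w w'
  proof -
    let ?run = "\<lambda>x. observer_run g undefined (\<lambda>k. h ((f ^^ k) x)) p"
    have "?run w = ?run w'" using same by (intro observer_run_causal) simp
    then show ?thesis using exact[OF observer_run_solution[OF assms(1)]] by metis
  qed
  with that show ?thesis by blast
qed

lemma unobs_trivial_beyond:
  assumes "linear f" "linear h" "p \<le> k"
    and nil: "\<And>w. \<forall>i<p. h ((f ^^ i) w) = 0 \<Longrightarrow> (f ^^ p) w = 0"
  shows "unobs f h k = {0}"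
proof
  show "unobs f h k \<subseteq> {0}"
  proof
    fix x assume "x \<in> unobs f h k"
    then obtain w where w: "(f ^^ k) w = x" "\<forall>i\<le>k. h ((f ^^ i) w) = 0"
      using unobs_trajectory by blast
    let ?w' = "(f ^^ (k - p)) w"
    have "(f ^^ i) ?w' = (f ^^ (i + (k - p))) w" for i by (simp add: funpow_add)
    then have "\<forall>i<p. h ((f ^^ i) ?w') = 0" using w(2) assms(3) by simp
    from nil[OF this] have "(f ^^ (p + (k - p))) w = 0" by (simp add: funpow_add)
    with w(1) assms(3) show "x \<in> {0}" by simp
  qed
qed (simp add: zero_in_unobs assms)

theorem deadbeat_observable_imp_unobs_trivial:
  fixes f :: "'a::euclidean_space \<Rightarrow> 'a"
  assumes "linear f" "linear h" "deadbeat_observable UNIV UNIV f h"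
  shows "unobs f h DIM('a) = {0}"
proof -
  obtain g where g: "setvalued_map UNIV UNIV g" "deadbeat_observer UNIV f h g"
    using assms(3) unfolding deadbeat_observable_def by blast
  obtain p where merge: "\<And>w w'. \<forall>i<p. h ((f ^^ i) w) = h ((f ^^ i) w') \<Longrightarrow> (f ^^ p) w = (f ^^ p) w'"
    using deadbeat_observer_merges[OF g] by blast
  have "(f ^^ p) w = 0" if "\<forall>i<p. h ((f ^^ i) w) = 0" for w
    using merge[of w 0] that funpow_linear_zero[OF assms(1)] linear_0[OF assms(2)] by simp
  then have "unobs f h (DIM('a) + p) = {0}"
    by (rule unobs_trivial_beyond[OF assms(1,2) le_add2])
  then show ?thesis using unobs_DIM_eq[OF assms(1,2)] by simp
qed

section \<open>Sufficiency\<close>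

text \<open>Error spaces: E_k contains every possible estimation error after k steps
  of the observer constructed below.\<close>

fun error_space :: "('a::real_vector \<Rightarrow> 'a) \<Rightarrow> ('a \<Rightarrow> 'b::real_vector) \<Rightarrow> nat \<Rightarrow> 'a set" where
  "error_space f h 0 = UNIV"
| "error_space f h (Suc k) = f ` (error_space f h k \<inter> {x. h x = 0})"

lemma error_space_unobs: "error_space f h k \<inter> {x. h x = 0} = unobs f h k"
  by (induction k) auto

lemma subspace_error_space:
  assumes "linear f" "linear h"
  shows "subspace (error_space f h k)"
  by (induction k)
     (auto intro!: subspace_inter linear_subspace_image linear_subspace_kernel subspace_UNIV assms)

lemma error_space_antimono:
  assumes "j \<le> k"
  shows "error_space f h k \<subseteq> error_space f h j"
proof -
  have "decseq (error_space f h)"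
  proof (rule decseq_SucI)
    show "error_space f h (Suc i) \<le> error_space f h i" for i
      by (induction i) auto
  qed
  then show ?thesis using assms by (rule decseqD)
qed

definition candidates :: "('a::real_vector \<Rightarrow> 'a) \<Rightarrow> ('a \<Rightarrow> 'b::real_vector) \<Rightarrow> nat \<Rightarrow> 'a \<Rightarrow> 'b \<Rightarrow> 'a set"
  where "candidates f h j xh y = f ` {z. h z = y \<and> z - xh \<in> error_space f h j}"

definition best_level :: "('a::real_vector \<Rightarrow> 'a) \<Rightarrow> ('a \<Rightarrow> 'b::real_vector) \<Rightarrow> nat \<Rightarrow> 'a \<Rightarrow> 'b \<Rightarrow> nat"
  where "best_level f h N xh y = (GREATEST j. j \<le> N \<and> candidates f h j xh y \<noteq> {})"

lemma best_level:
  assumes "j \<le> N" "candidates f h j xh y \<noteq> {}"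
  shows "j \<le> best_level f h N xh y" "candidates f h (best_level f h N xh y) xh y \<noteq> {}"
proof -
  let ?P = "\<lambda>j. j \<le> N \<and> candidates f h j xh y \<noteq> {}"
  have P: "?P j" and bounded: "\<And>i. ?P i \<Longrightarrow> i \<le> N" using assms by simp_all
  show "j \<le> best_level f h N xh y"
    unfolding best_level_def by (rule Greatest_le_nat[of ?P, OF P bounded])
  have "?P (GREATEST j. ?P j)" by (rule GreatestI_nat[of ?P, OF P bounded])
  then show "candidates f h (best_level f h N xh y) xh y \<noteq> {}"
    unfolding best_level_def by simp
qed

text \<open>The greedy observer moves to a candidate of the best level; if no level has a
  candidate (the output is inconsistent with every state) any value will do.\<close>

definition greedy_observer :: "('a::real_vector \<Rightarrow> 'a) \<Rightarrow> ('a \<Rightarrow> 'b::real_vector) \<Rightarrow> nat \<Rightarrow> 'a \<Rightarrow> 'b \<Rightarrow> 'a set"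
  where "greedy_observer f h N xh y =
    (if \<exists>j\<le>N. candidates f h j xh y \<noteq> {} then candidates f h (best_level f h N xh y) xh y else UNIV)"

lemma greedy_observer_setvalued: "setvalued_map UNIV UNIV (greedy_observer f h N)"
  unfolding setvalued_map_def greedy_observer_def
  by (simp split: if_split) (metis best_level(2))

text \<open>One observer step: an error in E_m (m \<le> N) becomes an error in E_(m+1), because
  the chosen level is at least m and the difference of two output-consistent states
  lies in ker h.\<close>

lemma greedy_observer_step:
  assumes lin: "linear f" "linear h"
    and err: "xh - x \<in> error_space f h m" and "m \<le> N"
    and next_est: "xh' \<in> greedy_observer f h N xh (h x)"
  shows "xh' - f x \<in> error_space f h (Suc m)"
proof -
  have E: "subspace (error_space f h j)" for j using subspace_error_space[OF lin] .
  let ?J = "best_level f h N xh (h x)"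
  have "x - xh \<in> error_space f h m" using subspace_neg[OF E err] by simp
  then have cand: "f x \<in> candidates f h m xh (h x)" by (auto simp: candidates_def)
  then have "m \<le> ?J" using best_level(1)[OF \<open>m \<le> N\<close>] by blast
  from next_est cand \<open>m \<le> N\<close> have "xh' \<in> candidates f h ?J xh (h x)"
    unfolding greedy_observer_def by (metis empty_iff)
  then obtain z where z: "xh' = f z" "h z = h x" "z - xh \<in> error_space f h ?J"
    by (auto simp: candidates_def)
  have "z - xh \<in> error_space f h m" using z(3) error_space_antimono[OF \<open>m \<le> ?J\<close>] by blast
  then have "(z - xh) + (xh - x) \<in> error_space f h m" using subspace_add[OF E _ err] by blast
  moreover have "h (z - x) = 0" using z(2) by (simp add: linear_diff[OF lin(2)])
  ultimately have "f (z - x) \<in> error_space f h (Suc m)" by simp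
  with z(1) show ?thesis by (simp add: linear_diff[OF lin(1)])
qed

lemma greedy_observer_error:
  assumes "linear f" "linear h"
    and sol: "observer_solution f h (greedy_observer f h N) xh x psi"
  shows "psi k - (f ^^ k) x \<in> error_space f h (min k N)"
proof (induction k)
  case (Suc k)
  have "psi (Suc k) \<in> greedy_observer f h N (psi k) (h ((f ^^ k) x))"
    using sol unfolding observer_solution_def by blast
  from greedy_observer_step[OF assms(1,2) Suc min.cobounded2 this]
  have "psi (Suc k) - (f ^^ Suc k) x \<in> error_space f h (Suc (min k N))" by simp
  moreover have "min (Suc k) N \<le> Suc (min k N)" by simp
  ultimately show ?case using error_space_antimono by blast
qed simp

text \<open>If S_N = {0} then E_(N+1) = {0}, so the greedy observer with N+1 levels is exact
  from time N+1 on.\<close>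

theorem unobs_trivial_imp_deadbeat_observable:
  assumes "linear f" "linear h" "unobs f h N = {0}"
  shows "deadbeat_observable UNIV UNIV f h"
proof -
  have "error_space f h (Suc N) = f ` unobs f h N"
    by (simp only: error_space.simps error_space_unobs)
  then have no_error: "error_space f h (Suc N) = {0}"
    using assms(3) linear_0[OF assms(1)] by simp
  have "psi k = (f ^^ k) x"
    if "observer_solution f h (greedy_observer f h (Suc N)) xh x psi" "Suc N \<le> k" for xh x psi k
    using greedy_observer_error[OF assms(1,2) that(1), of k] that(2) no_error by simp
  then have "deadbeat_observer UNIV f h (greedy_observer f h (Suc N))"
    unfolding deadbeat_observer_def by (intro exI[of _ "Suc N"]) auto
  then show ?thesis
    using greedy_observer_setvalued unfolding deadbeat_observable_def by blast
qed

theorem lemma1: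
  fixes A :: "real^'n^'n" and C :: "real^'n^'m"
  shows "deadbeat_observable (UNIV :: (real^'n) set) (UNIV :: (real^'m) set)
           (\<lambda>x. A *v x) (\<lambda>x. C *v x)
         \<longleftrightarrow> unobs_seq A C CARD('n) = {0}"
proof -
  have lin: "linear ((*v) A)" "linear ((*v) C)" by (simp_all add: matrix_vector_mul_linear)
  have "unobs_seq A C CARD('n) = unobs ((*v) A) ((*v) C) DIM(real^'n)"
    by (simp add: unobs_seq_eq_unobs)
  then show ?thesis
    using deadbeat_observable_imp_unobs_trivial[OF lin] unobs_trivial_imp_deadbeat_observable[OF lin]
    by auto
qed

end
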